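(* Let $(\mathcal C,S,T)$ be a semi-thin association schemoid. For any $\alpha,\beta,\gamma\in S_0$, $\sigma\in{}_\alpha S_\beta$ and $\tau\in{}_\beta S_\gamma$, there exists a unique $\mu\in{}_\alpha S_\gamma$ such that $p^\mu_{\tau\sigma}=1$; moreover $p^{\mu'}_{\tau\sigma}=0$ for every $\mu'\in S$ with $\mu'\neq\mu$.
   Context: Write $s(f),t(f)$ for source and target. A quasi-schemoid is a pair $(\mathcal C,S)$ with $\mathcal C$ a small category and $S$ a partition of $mor(\mathcal C)$ into nonempty blocks such that for all $\sigma,\tau,\mu\in S$ and $f,g\in\mu$ the sets $\{(a,b)\in\sigma\times\tau: s(a)=t(b), a\circ b=f\}$ and the analogous set for $g$ have equal cardinality, denoted $p^\mu_{\sigma\tau}$. An association schemoid is a triple $(\mathcal C,S,T)$ where $(\mathcal C,S)$ is a quasi-schemoid, every block containing an endomorphism consists only of endomorphisms, and $T:\mathcal C\to\mathcal C$ is a contravariant functor with $T^2=\mathrm{id}$ and $\{T(f):f\in\sigma\}\in S$ for all $\sigma\in S$. With $J_0=\{1_x\}$, it is unital if every block meeting $J_0$ lies in $J_0$. A unital association schemoid is semi-thin if (i) $\#\{f\in\sigma: s(f)=x\}\le 1$ for all $\sigma\in S$, $x\in ob(\mathcal C)$, and (ii) $\mathcal C$ is a groupoid and $T(f)=f^{-1}$ for all morphisms $f$. $S_0=\{\alpha\in S:\alpha\cap J_0\neq\emptyset\}$, and for $\alpha,\beta\in S_0$, ${}_\alpha S_\beta=\{\sigma\in S: p^\sigma_{\sigma\alpha}=p^\sigma_{\beta\sigma}=1\}$.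 *)

theory Defs
  imports Main "HOL-Library.Equipollence"
begin

text \<open>A small category given by explicit data: objects, morphisms, source, target,
  composition (Cmp a b = a o b, defined when Src a = Tgt b) and identities.\<close>

record ('o, 'm) cat =
  Ob  :: "'o set"
  Mor :: "'m set"
  Src :: "'m \<Rightarrow> 'o"
  Tgt :: "'m \<Rightarrow> 'o"
  Cmp :: "'m \<Rightarrow> 'm \<Rightarrow> 'm"
  Idn :: "'o \<Rightarrow> 'm"

definition is_category :: "('o, 'm) cat \<Rightarrow> bool" where
  "is_category C \<longleftrightarrow>
     (\<forall>f\<in>Mor C. Src C f \<in> Ob C \<and> Tgt C f \<in> Ob C) \<and>
     (\<forall>x\<in>Ob C. Idn C x \<in> Mor C \<and> Src C (Idn C x) = x \<and> Tgt C (Idn C x) = x) \<and>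
     (\<forall>a\<in>Mor C. \<forall>b\<in>Mor C. Src C a = Tgt C b \<longrightarrow>
        Cmp C a b \<in> Mor C \<and> Src C (Cmp C a b) = Src C b \<and> Tgt C (Cmp C a b) = Tgt C a) \<and>
     (\<forall>f\<in>Mor C. Cmp C f (Idn C (Src C f)) = f \<and> Cmp C (Idn C (Tgt C f)) f = f) \<and>
     (\<forall>a\<in>Mor C. \<forall>b\<in>Mor C. \<forall>c\<in>Mor C. Src C a = Tgt C b \<longrightarrow> Src C b = Tgt C c \<longrightarrow>
        Cmp C (Cmp C a b) c = Cmp C a (Cmp C b c))"

definition is_partition :: "'m set \<Rightarrow> 'm set set \<Rightarrow> bool" where
  "is_partition M S \<longleftrightarrow> (\<forall>\<sigma>\<in>S. \<sigma> \<noteq> {}) \<and> \<Union>S = M \<and>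
     (\<forall>\<sigma>\<in>S. \<forall>\<tau>\<in>S. \<sigma> \<noteq> \<tau> \<longrightarrow> \<sigma> \<inter> \<tau> = {})"

definition decomp :: "('o, 'm) cat \<Rightarrow> 'm set \<Rightarrow> 'm set \<Rightarrow> 'm \<Rightarrow> ('m \<times> 'm) set" where
  "decomp C \<sigma> \<tau> f = {(a, b). a \<in> \<sigma> \<and> b \<in> \<tau> \<and> Src C a = Tgt C b \<and> Cmp C a b = f}"

definition is_quasi_schemoid :: "('o, 'm) cat \<Rightarrow> 'm set set \<Rightarrow> bool" where
  "is_quasi_schemoid C S \<longleftrightarrow> is_category C \<and> is_partition (Mor C) S \<and>
     (\<forall>\<sigma>\<in>S. \<forall>\<tau>\<in>S. \<forall>\<mu>\<in>S. \<forall>f\<in>\<mu>. \<forall>g\<in>\<mu>. decomp C \<sigma> \<tau> f \<approx> decomp C \<sigma> \<tau> g)"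

text \<open>Structure constant p^mu_{sigma tau} (well defined by the quasi-schemoid axiom).\<close>
definition pc :: "('o, 'm) cat \<Rightarrow> 'm set \<Rightarrow> 'm set \<Rightarrow> 'm set \<Rightarrow> nat" where
  "pc C \<mu> \<sigma> \<tau> = card (decomp C \<sigma> \<tau> (SOME f. f \<in> \<mu>))"

definition is_contra_involution :: "('o, 'm) cat \<Rightarrow> ('o \<Rightarrow> 'o) \<Rightarrow> ('m \<Rightarrow> 'm) \<Rightarrow> bool" where
  "is_contra_involution C TO TM \<longleftrightarrow>
     (\<forall>x\<in>Ob C. TO x \<in> Ob C \<and> TO (TO x) = x \<and> TM (Idn C x) = Idn C (TO x)) \<and>
     (\<forall>f\<in>Mor C. TM f \<in> Mor C \<and> Src C (TM f) = TO (Tgt C f) \<and> Tgt C (TM f) = TO (Src C f)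
        \<and> TM (TM f) = f) \<and>
     (\<forall>a\<in>Mor C. \<forall>b\<in>Mor C. Src C a = Tgt C b \<longrightarrow> TM (Cmp C a b) = Cmp C (TM b) (TM a))"

definition is_association_schemoid ::
  "('o, 'm) cat \<Rightarrow> 'm set set \<Rightarrow> ('o \<Rightarrow> 'o) \<Rightarrow> ('m \<Rightarrow> 'm) \<Rightarrow> bool" where
  "is_association_schemoid C S TO TM \<longleftrightarrow> is_quasi_schemoid C S \<and>
     (\<forall>\<sigma>\<in>S. (\<exists>f\<in>\<sigma>. Src C f = Tgt C f) \<longrightarrow> (\<forall>f\<in>\<sigma>. Src C f = Tgt C f)) \<and>
     is_contra_involution C TO TM \<and>
     (\<forall>\<sigma>\<in>S. TM ` \<sigma> \<in> S)"

definition J0 :: "('o, 'm) cat \<Rightarrow> 'm set" where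
  "J0 C = Idn C ` Ob C"

definition is_unital :: "('o, 'm) cat \<Rightarrow> 'm set set \<Rightarrow> bool" where
  "is_unital C S \<longleftrightarrow> (\<forall>\<sigma>\<in>S. \<sigma> \<inter> J0 C \<noteq> {} \<longrightarrow> \<sigma> \<subseteq> J0 C)"

definition is_groupoid :: "('o, 'm) cat \<Rightarrow> bool" where
  "is_groupoid C \<longleftrightarrow> (\<forall>f\<in>Mor C. \<exists>g\<in>Mor C. Src C g = Tgt C f \<and> Tgt C g = Src C f \<and>
     Cmp C g f = Idn C (Src C f) \<and> Cmp C f g = Idn C (Tgt C f))"

definition is_semi_thin ::
  "('o, 'm) cat \<Rightarrow> 'm set set \<Rightarrow> ('o \<Rightarrow> 'o) \<Rightarrow> ('m \<Rightarrow> 'm) \<Rightarrow> bool" where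
  "is_semi_thin C S TO TM \<longleftrightarrow> is_association_schemoid C S TO TM \<and> is_unital C S \<and>
     (\<forall>\<sigma>\<in>S. \<forall>x\<in>Ob C. finite {f \<in> \<sigma>. Src C f = x} \<and> card {f \<in> \<sigma>. Src C f = x} \<le> 1) \<and>
     is_groupoid C \<and>
     (\<forall>f\<in>Mor C. Cmp C (TM f) f = Idn C (Src C f) \<and> Cmp C f (TM f) = Idn C (Tgt C f))"

definition S0 :: "('o, 'm) cat \<Rightarrow> 'm set set \<Rightarrow> 'm set set" where
  "S0 C S = {\<alpha>\<in>S. \<alpha> \<inter> J0 C \<noteq> {}}"

definition subS :: "('o, 'm) cat \<Rightarrow> 'm set set \<Rightarrow> 'm set \<Rightarrow> 'm set \<Rightarrow> 'm set set" where
  "subS C S \<alpha> \<beta> = {\<sigma>\<in>S. pc C \<sigma> \<sigma> \<alpha> = 1 \<and> pc C \<sigma> \<beta> \<sigma> = 1}"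

end

theory Submission
  imports Defs
begin

text \<open>In a semi-thin schemoid a morphism decomposes through two given blocks in at most
  one way, so every structure constant is 0 or 1.  If \<sigma> \<in> \<alpha>S\<beta> and \<tau> \<in> \<beta>S\<gamma>, every
  target of \<sigma> is a source of \<tau>, so there is a composite a \<circ> b with a \<in> \<tau>, b \<in> \<sigma>; let \<mu>
  be its block.  Applying the quasi-schemoid axiom to g \<circ> f = 1 with g inverse to f shows: if
  the identities of x and y lie in one block, then every block containing a morphism with
  source x also contains one with source y.  Hence \<mu> contains a morphism with every source
  allowed by \<alpha>; by thinness of \<sigma> and \<tau> it is the composite with that source, so all
  composites a \<circ> b lie in \<mu>.\<close>

locale category =
  fixes C :: "('o, 'm) cat"
  assumes is_category: "is_category C"
begin

lemma Src_in_Ob [simp]: "f \<in> Mor C \<Longrightarrow> Src C f \<in> Ob C"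
  and Tgt_in_Ob [simp]: "f \<in> Mor C \<Longrightarrow> Tgt C f \<in> Ob C"
  and Idn_in_Mor [simp]: "x \<in> Ob C \<Longrightarrow> Idn C x \<in> Mor C"
  and Src_Idn [simp]: "x \<in> Ob C \<Longrightarrow> Src C (Idn C x) = x"
  and Tgt_Idn [simp]: "x \<in> Ob C \<Longrightarrow> Tgt C (Idn C x) = x"
  and Cmp_Idn_right [simp]: "f \<in> Mor C \<Longrightarrow> Cmp C f (Idn C (Src C f)) = f"
  and Cmp_Idn_left [simp]: "f \<in> Mor C \<Longrightarrow> Cmp C (Idn C (Tgt C f)) f = f"
  using is_category unfolding is_category_def by blast+

lemma
  assumes "a \<in> Mor C" "b \<in> Mor C" "Src C a = Tgt C b"
  shows Cmp_in_Mor [simp]: "Cmp C a b \<in> Mor C"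
    and Src_Cmp [simp]: "Src C (Cmp C a b) = Src C b"
    and Tgt_Cmp [simp]: "Tgt C (Cmp C a b) = Tgt C a"
  using assms is_category unfolding is_category_def by blast+

end

locale quasi_schemoid = category C for C :: "('o, 'm) cat" +
  fixes S :: "'m set set"
  assumes partition: "is_partition (Mor C) S"
    and decomp_eqpoll: "\<lbrakk>\<rho> \<in> S; \<rho>' \<in> S; \<mu> \<in> S; f \<in> \<mu>; g \<in> \<mu>\<rbrakk>
      \<Longrightarrow> decomp C \<rho> \<rho>' f \<approx> decomp C \<rho> \<rho>' g"
begin

lemma block_nonempty: "\<rho> \<in> S \<Longrightarrow> \<rho> \<noteq> {}"
  and block_mem_Mor [simp]: "\<rho> \<in> S \<Longrightarrow> f \<in> \<rho> \<Longrightarrow> f \<in> Mor C"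
  and block_exists: "f \<in> Mor C \<Longrightarrow> \<exists>\<rho>\<in>S. f \<in> \<rho>"
  and block_unique: "\<lbrakk>\<rho> \<in> S; \<rho>' \<in> S; f \<in> \<rho>; f \<in> \<rho>'\<rbrakk> \<Longrightarrow> \<rho> = \<rho>'"
  using partition unfolding is_partition_def by blast+

lemma some_in_block: "\<rho> \<in> S \<Longrightarrow> (SOME f. f \<in> \<rho>) \<in> \<rho>"
  using block_nonempty by (meson ex_in_conv someI_ex)

lemma decomp_nonempty_transfer:
  assumes "\<rho> \<in> S" "\<rho>' \<in> S" "\<mu> \<in> S" "f \<in> \<mu>" "g \<in> \<mu>" "decomp C \<rho> \<rho>' f \<noteq> {}"
  shows "decomp C \<rho> \<rho>' g \<noteq> {}"
  using decomp_eqpoll[OF assms(1-5)] assms(6) unfolding eqpoll_def bij_betw_def by auto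

lemma exists_source_in_block:
  assumes "is_groupoid C" and "\<rho> \<in> S" "f \<in> \<rho>" and "\<epsilon> \<in> S" "Idn C (Src C f) \<in> \<epsilon>"
    and "y \<in> Ob C" "Idn C y \<in> \<epsilon>"
  shows "\<exists>g\<in>\<rho>. Src C g = y"
proof -
  obtain h where h: "h \<in> Mor C" "Src C h = Tgt C f" "Cmp C h f = Idn C (Src C f)"
    using assms(1-3) unfolding is_groupoid_def by fastforce
  obtain \<rho>' where \<rho>': "\<rho>' \<in> S" "h \<in> \<rho>'"
    using block_exists h(1) by blast
  have "(h, f) \<in> decomp C \<rho>' \<rho> (Idn C (Src C f))"
    unfolding decomp_def using h \<rho>' assms(3) by simp
  then have "decomp C \<rho>' \<rho> (Idn C y) \<noteq> {}"
    using decomp_nonempty_transfer[OF \<rho>'(1) assms(2,4,5,7)] by blast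
  then obtain c g where "c \<in> \<rho>'" "g \<in> \<rho>" "Src C c = Tgt C g" "Cmp C c g = Idn C y"
    unfolding decomp_def by auto
  then have "Src C g = y"
    using Src_Cmp[of c g] \<rho>'(1) assms(2,6) by (metis Src_Idn block_mem_Mor)
  with \<open>g \<in> \<rho>\<close> show ?thesis by blast
qed

end

locale semi_thin_schemoid = quasi_schemoid C S for C :: "('o, 'm) cat" and S +
  assumes unital: "is_unital C S"
    and source_unique: "\<lbrakk>\<rho> \<in> S; f \<in> \<rho>; g \<in> \<rho>; Src C f = Src C g\<rbrakk> \<Longrightarrow> f = g"
    and groupoid: "is_groupoid C"

lemma is_semi_thin_imp_semi_thin_schemoid:
  assumes "is_semi_thin C S TO TM"
  shows "semi_thin_schemoid C S"
proof -
  have qs: "is_quasi_schemoid C S" and thin: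
    "\<forall>\<sigma>\<in>S. \<forall>x\<in>Ob C. finite {f \<in> \<sigma>. Src C f = x} \<and> card {f \<in> \<sigma>. Src C f = x} \<le> 1"
    using assms unfolding is_semi_thin_def is_association_schemoid_def by blast+
  interpret quasi_schemoid C S
    using qs unfolding is_quasi_schemoid_def by unfold_locales blast+
  show ?thesis
  proof
    fix \<rho> f g assume "\<rho> \<in> S" "f \<in> \<rho>" "g \<in> \<rho>" "Src C f = Src C g"
    moreover have "Src C f \<in> Ob C" using \<open>\<rho> \<in> S\<close> \<open>f \<in> \<rho>\<close> by simp
    ultimately show "f = g"
      using thin card_le_Suc0_iff_eq[of "{h \<in> \<rho>. Src C h = Src C f}"] by auto
  qed (use assms in \<open>simp_all add: is_semi_thin_def\<close>)
qed

context semi_thin_schemoid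
begin

lemma S0_block: "\<epsilon> \<in> S0 C S \<Longrightarrow> \<epsilon> \<in> S"
  and S0_identities: "\<epsilon> \<in> S0 C S \<Longrightarrow> h \<in> \<epsilon> \<Longrightarrow> \<exists>x\<in>Ob C. h = Idn C x"
  using unital unfolding S0_def is_unital_def J0_def by blast+

lemma decomp_unique:
  assumes "\<tau> \<in> S" "\<sigma> \<in> S" "p \<in> decomp C \<tau> \<sigma> f" "q \<in> decomp C \<tau> \<sigma> f"
  shows "p = q"
proof -
  obtain a b a' b' where pq: "p = (a, b)" "q = (a', b')" by (cases p, cases q)
  have m: "a \<in> \<tau>" "b \<in> \<sigma>" "Src C a = Tgt C b" "Cmp C a b = f"
    "a' \<in> \<tau>" "b' \<in> \<sigma>" "Src C a' = Tgt C b'" "Cmp C a' b' = f"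
    using assms(3,4) unfolding pq decomp_def by auto
  have "Src C b = Src C f"
    using Src_Cmp[OF block_mem_Mor[OF assms(1) m(1)] block_mem_Mor[OF assms(2) m(2)] m(3)] m(4)
    by simp
  moreover have "Src C b' = Src C f"
    using Src_Cmp[OF block_mem_Mor[OF assms(1) m(5)] block_mem_Mor[OF assms(2) m(6)] m(7)] m(8)
    by simp
  ultimately have "b = b'" using source_unique[OF assms(2) m(2) m(6)] by simp
  then have "a = a'" using source_unique[OF assms(1) m(1) m(5)] m(3,7) by simp
  with \<open>b = b'\<close> show ?thesis using pq by simp
qed

lemma pc_cases:
  assumes "\<mu> \<in> S" "\<tau> \<in> S" "\<sigma> \<in> S" "f \<in> \<mu>"
  shows "pc C \<mu> \<tau> \<sigma> = (if decomp C \<tau> \<sigma> f = {} then 0 else 1)"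
proof -
  let ?f = "SOME f. f \<in> \<mu>"
  have "decomp C \<tau> \<sigma> ?f = {} \<longleftrightarrow> decomp C \<tau> \<sigma> f = {}"
    using decomp_nonempty_transfer[OF assms(2,3,1)] some_in_block[OF assms(1)] assms(4) by blast
  moreover have "card (decomp C \<tau> \<sigma> ?f) = 1" if ne: "decomp C \<tau> \<sigma> ?f \<noteq> {}"
  proof -
    obtain p where "p \<in> decomp C \<tau> \<sigma> ?f" using ne by blast
    then have "decomp C \<tau> \<sigma> ?f = {p}"
      using decomp_unique[OF assms(2,3)] by blast
    then show ?thesis by simp
  qed
  ultimately show ?thesis unfolding pc_def by auto
qed

lemma decomp_right_S0_iff:
  assumes "\<epsilon> \<in> S0 C S" "\<rho> \<in> S" "f \<in> Mor C"
  shows "decomp C \<rho> \<epsilon> f \<noteq> {} \<longleftrightarrow> f \<in> \<rho> \<and> Idn C (Src C f) \<in> \<epsilon>"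
proof
  assume "decomp C \<rho> \<epsilon> f \<noteq> {}"
  then obtain a b where ab: "a \<in> \<rho>" "b \<in> \<epsilon>" "Src C a = Tgt C b" "Cmp C a b = f"
    unfolding decomp_def by auto
  obtain y where "y \<in> Ob C" "b = Idn C y" using S0_identities assms(1) ab(2) by blast
  with ab assms(2) show "f \<in> \<rho> \<and> Idn C (Src C f) \<in> \<epsilon>" by auto
next
  assume "f \<in> \<rho> \<and> Idn C (Src C f) \<in> \<epsilon>"
  then have "(f, Idn C (Src C f)) \<in> decomp C \<rho> \<epsilon> f"
    unfolding decomp_def using assms(3) by simp
  then show "decomp C \<rho> \<epsilon> f \<noteq> {}" by blast
qed

lemma decomp_left_S0_iff:
  assumes "\<epsilon> \<in> S0 C S" "\<rho> \<in> S" "f \<in> Mor C"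
  shows "decomp C \<epsilon> \<rho> f \<noteq> {} \<longleftrightarrow> f \<in> \<rho> \<and> Idn C (Tgt C f) \<in> \<epsilon>"
proof
  assume "decomp C \<epsilon> \<rho> f \<noteq> {}"
  then obtain a b where ab: "a \<in> \<epsilon>" "b \<in> \<rho>" "Src C a = Tgt C b" "Cmp C a b = f"
    unfolding decomp_def by auto
  obtain y where "y \<in> Ob C" "a = Idn C y" using S0_identities assms(1) ab(1) by blast
  with ab assms(2) show "f \<in> \<rho> \<and> Idn C (Tgt C f) \<in> \<epsilon>" by auto
next
  assume "f \<in> \<rho> \<and> Idn C (Tgt C f) \<in> \<epsilon>"
  then have "(Idn C (Tgt C f), f) \<in> decomp C \<epsilon> \<rho> f"
    unfolding decomp_def using assms(3) by simp
  then show "decomp C \<epsilon> \<rho> f \<noteq> {}" by blast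
qed

lemma pc_eq_1_iff:
  assumes "\<mu> \<in> S" "\<tau> \<in> S" "\<sigma> \<in> S"
  shows "pc C \<mu> \<tau> \<sigma> = 1 \<longleftrightarrow> (\<forall>f\<in>\<mu>. decomp C \<tau> \<sigma> f \<noteq> {})"
proof -
  obtain f where f: "f \<in> \<mu>" using block_nonempty assms(1) by blast
  then have "pc C \<mu> \<tau> \<sigma> = 1 \<longleftrightarrow> decomp C \<tau> \<sigma> f \<noteq> {}"
    using pc_cases[OF assms f] by simp
  also have "\<dots> \<longleftrightarrow> (\<forall>g\<in>\<mu>. decomp C \<tau> \<sigma> g \<noteq> {})"
    using decomp_nonempty_transfer[OF assms(2,3,1)] f by blast
  finally show ?thesis .
qed

lemma subS_iff:
  assumes "\<alpha> \<in> S0 C S" "\<beta> \<in> S0 C S"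
  shows "\<sigma> \<in> subS C S \<alpha> \<beta> \<longleftrightarrow>
    \<sigma> \<in> S \<and> (\<forall>f\<in>\<sigma>. Idn C (Src C f) \<in> \<alpha> \<and> Idn C (Tgt C f) \<in> \<beta>)"
proof (cases "\<sigma> \<in> S")
  case True
  have "pc C \<sigma> \<sigma> \<alpha> = 1 \<longleftrightarrow> (\<forall>f\<in>\<sigma>. Idn C (Src C f) \<in> \<alpha>)"
    using pc_eq_1_iff[OF True True S0_block[OF assms(1)]]
      decomp_right_S0_iff[OF assms(1) True] True by simp
  moreover have "pc C \<sigma> \<beta> \<sigma> = 1 \<longleftrightarrow> (\<forall>f\<in>\<sigma>. Idn C (Tgt C f) \<in> \<beta>)"
    using pc_eq_1_iff[OF True S0_block[OF assms(2)] True]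
      decomp_left_S0_iff[OF assms(2) True] True by simp
  ultimately show ?thesis unfolding subS_def using True by blast
qed (simp add: subS_def)

lemma composite_block_exists:
  assumes "\<alpha> \<in> S0 C S" "\<beta> \<in> S0 C S" "\<gamma> \<in> S0 C S"
    and "\<sigma> \<in> subS C S \<alpha> \<beta>" "\<tau> \<in> subS C S \<beta> \<gamma>"
  shows "\<exists>\<mu>\<in>S. \<forall>f\<in>\<mu>. decomp C \<tau> \<sigma> f \<noteq> {}"
proof -
  have \<sigma>: "\<sigma> \<in> S" "\<forall>h\<in>\<sigma>. Idn C (Tgt C h) \<in> \<beta>"
    using assms(4) unfolding subS_iff[OF assms(1,2)] by blast+
  have \<tau>: "\<tau> \<in> S" "\<forall>h\<in>\<tau>. Idn C (Src C h) \<in> \<beta>"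
    using assms(5) unfolding subS_iff[OF assms(2,3)] by blast+
  obtain b where b: "b \<in> \<sigma>" using block_nonempty \<sigma>(1) by blast
  obtain a' where a': "a' \<in> \<tau>" using block_nonempty \<tau>(1) by blast
  have "Tgt C b \<in> Ob C" "Idn C (Tgt C b) \<in> \<beta>" using \<sigma> b by simp_all
  then obtain a where a: "a \<in> \<tau>" "Src C a = Tgt C b"
    using exists_source_in_block[OF groupoid \<tau>(1) a' S0_block[OF assms(2)] bspec[OF \<tau>(2) a']]
    by blast
  then have "Cmp C a b \<in> Mor C" using \<sigma>(1) \<tau>(1) b by simp
  then obtain \<mu> where \<mu>: "\<mu> \<in> S" "Cmp C a b \<in> \<mu>" using block_exists by blast
  have "(a, b) \<in> decomp C \<tau> \<sigma> (Cmp C a b)" unfolding decomp_def using a b by simp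
  then have "\<forall>f\<in>\<mu>. decomp C \<tau> \<sigma> f \<noteq> {}"
    using decomp_nonempty_transfer[OF \<tau>(1) \<sigma>(1) \<mu>] by blast
  with \<mu>(1) show ?thesis by blast
qed

lemma composite_block_unique:
  assumes "\<alpha> \<in> S0 C S" "\<beta> \<in> S0 C S" "\<sigma> \<in> subS C S \<alpha> \<beta>" "\<tau> \<in> S"
    and "\<mu> \<in> S" "f \<in> \<mu>" "decomp C \<tau> \<sigma> f \<noteq> {}"
    and "\<mu>' \<in> S" "f' \<in> \<mu>'" "decomp C \<tau> \<sigma> f' \<noteq> {}"
  shows "\<mu>' = \<mu>"
proof -
  have \<sigma>: "\<sigma> \<in> S" "\<forall>h\<in>\<sigma>. Idn C (Src C h) \<in> \<alpha>"
    using assms(3) unfolding subS_iff[OF assms(1,2)] by blast+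
  have Src_decomp: "Src C h = Src C b \<and> b \<in> \<sigma>" if "(a, b) \<in> decomp C \<tau> \<sigma> h" for a b h
    using that assms(4) \<sigma>(1) unfolding decomp_def by auto
  obtain a b where ab: "(a, b) \<in> decomp C \<tau> \<sigma> f'" using assms(10) by auto
  obtain a0 b0 where "(a0, b0) \<in> decomp C \<tau> \<sigma> f" using assms(7) by auto
  then have "Idn C (Src C f) \<in> \<alpha>" using Src_decomp \<sigma>(2) by metis
  moreover have "Idn C (Src C b) \<in> \<alpha>" "Src C b \<in> Ob C"
    using Src_decomp[OF ab] \<sigma> by auto
  ultimately obtain g where g: "g \<in> \<mu>" "Src C g = Src C b"
    using exists_source_in_block[OF groupoid assms(5,6) S0_block[OF assms(1)]] by blast
  then have "decomp C \<tau> \<sigma> g \<noteq> {}"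
    using decomp_nonempty_transfer[OF assms(4) \<sigma>(1) assms(5,6)] assms(7) by blast
  then obtain a' b' where ab': "(a', b') \<in> decomp C \<tau> \<sigma> g" by auto
  have "b' = b" using source_unique[OF \<sigma>(1)] Src_decomp[OF ab'] Src_decomp[OF ab] g(2) by metis
  with ab ab' have "g = f'" unfolding decomp_def using source_unique[OF assms(4), of a' a] by auto
  then show ?thesis using block_unique assms(5,8,9) g(1) by blast
qed

lemma composite_block_in_subS:
  assumes "\<alpha> \<in> S0 C S" "\<beta> \<in> S0 C S" "\<gamma> \<in> S0 C S"
    and "\<sigma> \<in> subS C S \<alpha> \<beta>" "\<tau> \<in> subS C S \<beta> \<gamma>"
    and "\<mu> \<in> S" "\<forall>f\<in>\<mu>. decomp C \<tau> \<sigma> f \<noteq> {}"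
  shows "\<mu> \<in> subS C S \<alpha> \<gamma>"
proof -
  have \<sigma>: "\<sigma> \<in> S" "\<forall>h\<in>\<sigma>. Idn C (Src C h) \<in> \<alpha>"
    using assms(4) unfolding subS_iff[OF assms(1,2)] by blast+
  have \<tau>: "\<tau> \<in> S" "\<forall>h\<in>\<tau>. Idn C (Tgt C h) \<in> \<gamma>"
    using assms(5) unfolding subS_iff[OF assms(2,3)] by blast+
  have "Idn C (Src C f) \<in> \<alpha> \<and> Idn C (Tgt C f) \<in> \<gamma>" if f: "f \<in> \<mu>" for f
  proof -
    obtain a b where ab: "a \<in> \<tau>" "b \<in> \<sigma>" "Src C a = Tgt C b" "Cmp C a b = f"
      using assms(7) f unfolding decomp_def by blast
    have "a \<in> Mor C" "b \<in> Mor C" using ab(1,2) \<sigma>(1) \<tau>(1) by simp_all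
    then have "Src C f = Src C b" "Tgt C f = Tgt C a" using ab(3,4) by auto
    then show ?thesis using ab(1,2) \<sigma>(2) \<tau>(2) by simp
  qed
  then show ?thesis unfolding subS_iff[OF assms(1,3)] using assms(6) by blast
qed

end

theorem lemma4p4:
  fixes C :: "('o, 'm) cat" and S :: "'m set set"
    and TO :: "'o \<Rightarrow> 'o" and TM :: "'m \<Rightarrow> 'm"
  assumes "is_semi_thin C S TO TM"
    and "\<alpha> \<in> S0 C S" and "\<beta> \<in> S0 C S" and "\<gamma> \<in> S0 C S"
    and "\<sigma> \<in> subS C S \<alpha> \<beta>" and "\<tau> \<in> subS C S \<beta> \<gamma>"
  shows "\<exists>\<mu>. \<mu> \<in> subS C S \<alpha> \<gamma> \<and> pc C \<mu> \<tau> \<sigma> = 1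
            \<and> (\<forall>\<mu>'\<in>subS C S \<alpha> \<gamma>. pc C \<mu>' \<tau> \<sigma> = 1 \<longrightarrow> \<mu>' = \<mu>)
            \<and> (\<forall>\<mu>'\<in>S. \<mu>' \<noteq> \<mu> \<longrightarrow> pc C \<mu>' \<tau> \<sigma> = 0)"
proof -
  interpret semi_thin_schemoid C S
    using is_semi_thin_imp_semi_thin_schemoid assms(1) .
  obtain \<mu> where \<mu>: "\<mu> \<in> S" and dec: "\<forall>f\<in>\<mu>. decomp C \<tau> \<sigma> f \<noteq> {}"
    using composite_block_exists assms(2-6) by blast
  have \<tau>: "\<tau> \<in> S" and \<sigma>: "\<sigma> \<in> S" using assms(5,6) unfolding subS_def by simp_all
  obtain f where f: "f \<in> \<mu>" using block_nonempty \<mu> by blast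
  have pc_\<mu>: "pc C \<mu> \<tau> \<sigma> = 1" using pc_eq_1_iff[OF \<mu> \<tau> \<sigma>] dec by blast
  have pc_other: "pc C \<mu>' \<tau> \<sigma> = 0" if "\<mu>' \<in> S" "\<mu>' \<noteq> \<mu>" for \<mu>'
    using composite_block_unique[OF assms(2,3,5) \<tau> \<mu> f bspec[OF dec f] that(1)]
      pc_cases[OF that(1) \<tau> \<sigma> some_in_block[OF that(1)]] some_in_block[OF that(1)] that(2)
    by auto
  show ?thesis
  proof (intro exI[of _ \<mu>] conjI ballI impI)
    show "\<mu> \<in> subS C S \<alpha> \<gamma>" using composite_block_in_subS[OF assms(2-6) \<mu> dec] .
    show "pc C \<mu> \<tau> \<sigma> = 1" by (fact pc_\<mu>)
  next
    fix \<mu>' assume "\<mu>' \<in> subS C S \<alpha> \<gamma>" "pc C \<mu>' \<tau> \<sigma> = 1"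
    then show "\<mu>' = \<mu>" using pc_other unfolding subS_def by fastforce
  next
    fix \<mu>' assume "\<mu>' \<in> S" "\<mu>' \<noteq> \<mu>"
    then show "pc C \<mu>' \<tau> \<sigma> = 0" by (rule pc_other)
  qed
qed

end
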